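(* For every even integer $k \geq 2$ there exists a family $(G_i)_{i\in\mathbb{N}}$ (with $\mathbb{N}=\{0,1,2,\dots\}$) of $k$-degenerate undirected graphs such that $$n(G_i)=\frac{3k+6}{2}+i\,\frac{3k+4}{2}\qquad\text{and}\qquad f(G_i)=\frac{3k-2}{2}+i\,\frac{3k-2}{2}.$$
   Context: All graphs are finite and simple. For a graph $G$, $n(G)$ denotes its number of vertices and $f(G)$ the minimum size of a feedback vertex set, i.e. of a set $F\subseteq V(G)$ such that $G-F$ contains no cycle. An ordering $\phi:V\to\{1,\dots,|V|\}$ (a bijection) is a $k$-elimination ordering if every vertex $v$ has at most $k$ neighbours $u$ with $\phi(u)<\phi(v)$. A graph is $k$-degenerate if it has a $k$-elimination ordering. *)

theory Defs
  imports Main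
begin

definition simple_graph :: "'a set \<Rightarrow> 'a set set \<Rightarrow> bool" where
  "simple_graph V E \<longleftrightarrow> finite V \<and> (\<forall>e\<in>E. e \<subseteq> V \<and> card e = 2)"

definition n_vertices :: "'a set \<Rightarrow> 'a set set \<Rightarrow> nat" where
  "n_vertices V E = card V"

definition is_cycle :: "'a set \<Rightarrow> 'a set set \<Rightarrow> 'a list \<Rightarrow> bool" where
  "is_cycle V E cs \<longleftrightarrow> length cs \<ge> 3 \<and> distinct cs \<and> set cs \<subseteq> V \<and>
     (\<forall>j < length cs. {cs ! j, cs ! ((j + 1) mod length cs)} \<in> E)"

definition has_cycle :: "'a set \<Rightarrow> 'a set set \<Rightarrow> bool" where
  "has_cycle V E \<longleftrightarrow> (\<exists>cs. is_cycle V E cs)"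

definition delete_vertices_E :: "'a set set \<Rightarrow> 'a set \<Rightarrow> 'a set set" where
  "delete_vertices_E E F = {e \<in> E. e \<inter> F = {}}"

definition is_fvs :: "'a set \<Rightarrow> 'a set set \<Rightarrow> 'a set \<Rightarrow> bool" where
  "is_fvs V E F \<longleftrightarrow> F \<subseteq> V \<and> \<not> has_cycle (V - F) (delete_vertices_E E F)"

definition fvs_number :: "'a set \<Rightarrow> 'a set set \<Rightarrow> nat" where
  "fvs_number V E = (LEAST m. \<exists>F. is_fvs V E F \<and> card F = m)"

definition elimination_ordering :: "nat \<Rightarrow> 'a set \<Rightarrow> 'a set set \<Rightarrow> ('a \<Rightarrow> nat) \<Rightarrow> bool" where
  "elimination_ordering k V E \<phi> \<longleftrightarrow> bij_betw \<phi> V {1..card V} \<and>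
     (\<forall>v\<in>V. card {u \<in> V. {u, v} \<in> E \<and> \<phi> u < \<phi> v} \<le> k)"

definition degenerate :: "nat \<Rightarrow> 'a set \<Rightarrow> 'a set set \<Rightarrow> bool" where
  "degenerate k V E \<longleftrightarrow> (\<exists>\<phi>. elimination_ordering k V E \<phi>)"

end

theory Submission
  imports Defs
begin

(* For k = 2m, G_i is a chain of i + 1 blocks, each made of a (k+1)-clique A and an (m+1)-clique B
   joined by some edges, where B is also joined to the lower part of the next block's A, plus an
   apex joined to the first B.  Numbering the vertices block by block shows k-degeneracy.  An
   induced forest meets every clique in at most two vertices, and a forest vertex in one B forbids
   two forest vertices in both the next A and the next B; so an induced forest has at most
   3(i + 1) + 1 vertices, and three well-chosen vertices per block plus the apex attain this bound.
   Hence f(G_i) = n(G_i) - (3i + 4). *)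

lemma has_cycle_delete_vertices_E:
  "has_cycle (V - F) (delete_vertices_E E F) \<longleftrightarrow> has_cycle (V - F) E"
proof
  assume "has_cycle (V - F) E"
  then obtain cs where cs: "is_cycle (V - F) E cs" by (auto simp: has_cycle_def)
  have "cs ! j \<in> set cs" "cs ! ((j + 1) mod length cs) \<in> set cs" if "j < length cs" for j
    using that by (auto intro!: nth_mem mod_less_divisor)
  moreover have "set cs \<subseteq> V - F" using cs by (simp add: is_cycle_def)
  ultimately have "{cs ! j, cs ! ((j + 1) mod length cs)} \<inter> F = {}" if "j < length cs" for j
    using that by blast
  with cs have "is_cycle (V - F) (delete_vertices_E E F) cs"
    by (auto simp: is_cycle_def delete_vertices_E_def)
  then show "has_cycle (V - F) (delete_vertices_E E F)" by (auto simp: has_cycle_def)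
qed (auto simp: has_cycle_def is_cycle_def delete_vertices_E_def)

lemma is_fvs_iff: "is_fvs V E F \<longleftrightarrow> F \<subseteq> V \<and> \<not> has_cycle (V - F) E"
  by (simp add: is_fvs_def has_cycle_delete_vertices_E)

lemma fvs_number_eq_card_minus_max_forest:
  assumes "finite V" and "S \<subseteq> V" and "\<not> has_cycle S E"
    and max: "\<And>T. T \<subseteq> V \<Longrightarrow> \<not> has_cycle T E \<Longrightarrow> card T \<le> card S"
  shows "fvs_number V E = card V - card S"
  unfolding fvs_number_def
proof (rule Least_equality)
  have "V - (V - S) = S" using assms(2) by blast
  then have "is_fvs V E (V - S)" using assms(3) by (simp add: is_fvs_iff)
  moreover have "card (V - S) = card V - card S"
    using assms(1,2) by (simp add: card_Diff_subset finite_subset)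
  ultimately show "\<exists>F. is_fvs V E F \<and> card F = card V - card S" by blast
next
  fix n assume "\<exists>F. is_fvs V E F \<and> card F = n"
  then obtain F where F: "F \<subseteq> V" "\<not> has_cycle (V - F) E" "card F = n"
    by (auto simp: is_fvs_iff)
  have "card (V - F) \<le> card S" using max[OF _ F(2)] by blast
  moreover have "card (V - F) = card V - card F"
    using assms(1) F(1) by (simp add: card_Diff_subset finite_subset)
  moreover have "card F \<le> card V" using assms(1) F(1) by (rule card_mono)
  ultimately show "card V - card S \<le> n" using F(3) by linarith
qed

lemma has_cycle_triangle:
  assumes "{a, b, c} \<subseteq> V" "distinct [a, b, c]" "{a, b} \<in> E" "{b, c} \<in> E" "{c, a} \<in> E"
  shows "has_cycle V E"
proof -
  have "{[a, b, c] ! j, [a, b, c] ! ((j + 1) mod 3)} \<in> E" if "j < 3" for j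
  proof -
    from that have "j = 0 \<or> j = 1 \<or> j = 2" by auto
    then show ?thesis using assms(3-5) by auto
  qed
  then show ?thesis using assms(1,2) unfolding has_cycle_def is_cycle_def
    by (intro exI[of _ "[a, b, c]"]) auto
qed

lemma has_cycle_square:
  assumes "{a, b, c, d} \<subseteq> V" "distinct [a, b, c, d]"
    "{a, b} \<in> E" "{b, c} \<in> E" "{c, d} \<in> E" "{d, a} \<in> E"
  shows "has_cycle V E"
proof -
  have "{[a, b, c, d] ! j, [a, b, c, d] ! ((j + 1) mod 4)} \<in> E" if "j < 4" for j
  proof -
    from that have "j = 0 \<or> j = 1 \<or> j = 2 \<or> j = 3" by auto
    then show ?thesis using assms(3-6) by auto
  qed
  then show ?thesis using assms(1,2) unfolding has_cycle_def is_cycle_def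
    by (intro exI[of _ "[a, b, c, d]"]) auto
qed

lemma has_cycle_two_linked_edges:
  assumes "{p, p', q, q'} \<subseteq> V" "distinct [p, p', q, q']" "{p, p'} \<in> E" "{q, q'} \<in> E"
    and "{p, q} \<in> E \<or> {p, q'} \<in> E" and "{p', q} \<in> E \<or> {p', q'} \<in> E"
  shows "has_cycle V E"
proof -
  have sym: "{x, y} = {y, x}" for x y :: 'a by blast
  from assms(5,6) consider "{p, q} \<in> E" "{p', q} \<in> E" | "{p, q'} \<in> E" "{p', q'} \<in> E"
    | "{p, q} \<in> E" "{p', q'} \<in> E" | "{p, q'} \<in> E" "{p', q} \<in> E" by blast
  then show ?thesis
  proof cases
    case 1
    then show ?thesis using assms(1-3) sym by (intro has_cycle_triangle[of p p' q]) auto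
  next
    case 2
    then show ?thesis using assms(1-3) sym by (intro has_cycle_triangle[of p p' q']) auto
  next
    case 3
    then show ?thesis using assms(1-4) sym by (intro has_cycle_square[of p p' q' q]) auto
  next
    case 4
    then show ?thesis using assms(1-4) sym by (intro has_cycle_square[of p p' q q']) auto
  qed
qed

lemma card_ge_2_obtains:
  assumes "2 \<le> card X"
  obtains x y where "x \<in> X" "y \<in> X" "x \<noteq> y"
  using obtain_subset_with_card_n[OF assms] by (metis card_2_iff insert_subset)

lemma card_clique_le_2_if_no_cycle:
  assumes "\<And>x y. x \<in> K \<Longrightarrow> y \<in> K \<Longrightarrow> x \<noteq> y \<Longrightarrow> {x, y} \<in> E" and "\<not> has_cycle S E"
  shows "card (S \<inter> K) \<le> 2"
proof (rule ccontr)
  assume "\<not> card (S \<inter> K) \<le> 2"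
  then obtain T where "T \<subseteq> S \<inter> K" "card T = 3"
    by (metis not_less_eq_eq numeral_2_eq_2 numeral_3_eq_3 obtain_subset_with_card_n)
  then obtain a b c where "{a, b, c} \<subseteq> S \<inter> K" "distinct [a, b, c]" by (auto simp: card_3_iff)
  then have "has_cycle S E" using assms(1) by (intro has_cycle_triangle) auto
  with assms(2) show False by contradiction
qed

lemma no_cycle_if_unique_smaller_neighbour:
  fixes S :: "'a :: linorder set"
  assumes unique: "\<And>v u w. v \<in> S \<Longrightarrow> u \<in> S \<Longrightarrow> w \<in> S \<Longrightarrow> u < v \<Longrightarrow> w < v \<Longrightarrow>
      {u, v} \<in> E \<Longrightarrow> {w, v} \<in> E \<Longrightarrow> u = w"
  shows "\<not> has_cycle S E"
proof
  assume "has_cycle S E"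
  then obtain cs where cs: "3 \<le> length cs" "distinct cs" "set cs \<subseteq> S"
    and edge: "\<And>j. j < length cs \<Longrightarrow> {cs ! j, cs ! ((j + 1) mod length cs)} \<in> E"
    by (auto simp: has_cycle_def is_cycle_def)
  define L where "L = length cs"
  have L3: "3 \<le> L" using cs(1) by (simp add: L_def)
  have "Max (set cs) \<in> set cs" using cs(1) by (intro Max_in) auto
  then obtain t where t: "t < L" "cs ! t = Max (set cs)" by (auto simp: L_def in_set_conv_nth)
  \<comment> \<open>the largest vertex of the cycle has two smaller neighbours on it\<close>
  define s where "s = (t + (L - 1)) mod L"
  define r where "r = (t + 1) mod L"
  have s: "s < L" "(s + 1) mod L = t"
    using t(1) L3 unfolding s_def by (auto simp: mod_Suc_eq mod_add_left_eq[symmetric])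
  have r: "r < L" using L3 unfolding r_def by simp
  have "s \<noteq> t" "r \<noteq> t" "s \<noteq> r" using t(1) L3 unfolding s_def r_def by (auto simp: mod_if)
  then have ne: "cs ! s \<noteq> cs ! t" "cs ! r \<noteq> cs ! t" "cs ! s \<noteq> cs ! r"
    using cs(2) s(1) r t(1) by (auto simp: L_def nth_eq_iff_index_eq)
  have mem: "cs ! s \<in> set cs" "cs ! r \<in> set cs" "cs ! t \<in> set cs"
    using s(1) r t(1) by (auto simp: L_def)
  have "cs ! s < cs ! t" "cs ! r < cs ! t"
    using ne mem t(2) Max_ge[of "set cs"] by (auto simp: order.strict_iff_order)
  moreover have "{cs ! s, cs ! t} \<in> E" "{cs ! r, cs ! t} \<in> E"
    using edge[of s] edge[of t] s t(1) by (auto simp: L_def r_def insert_commute)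
  ultimately show False using unique ne(3) mem cs(3) by blast
qed

lemma degenerate_atMost:
  fixes E :: "nat set set"
  assumes "\<And>v. v \<le> n \<Longrightarrow> card {u. u < v \<and> {u, v} \<in> E} \<le> k"
  shows "degenerate k {..n} E"
  unfolding degenerate_def elimination_ordering_def
proof (intro exI[of _ Suc] conjI ballI)
  show "bij_betw Suc {..n} {1..card {..n}}"
    by (simp add: bij_betw_def image_Suc_atMost atLeast1_atMost_eq_remove0)
next
  fix v assume "v \<in> {..n}"
  moreover have "{u \<in> {..n}. {u, v} \<in> E \<and> Suc u < Suc v} = {u. u < v \<and> {u, v} \<in> E}"
    using \<open>v \<in> {..n}\<close> by auto
  ultimately show "card {u \<in> {..n}. {u, v} \<in> E \<and> Suc u < Suc v} \<le> k" using assms by simp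
qed

locale chain_graph =
  fixes m i :: nat
  assumes m_pos: "1 \<le> m"
begin

definition N :: nat where "N = 3 * m + 2"
definition apex :: nat where "apex = Suc i * N"
definition vertices :: "nat set" where "vertices = {..apex}"

(* Vertex v < apex is vertex number v mod N of block v div N.  Numbers 0..2m form the clique A
   and numbers 2m+1..3m+1 the clique B of a block; link b p c q says that vertex p of block b
   is joined to vertex q of block c.  The apex is joined to the B of block 0. *)
definition link :: "nat \<Rightarrow> nat \<Rightarrow> nat \<Rightarrow> nat \<Rightarrow> bool" where
  "link b p c q \<longleftrightarrow>
     c = b \<and> p \<le> 2 * m \<and> q \<le> 2 * m \<or>
     c = b \<and> 2 * m < p \<and> 2 * m < q \<or>
     c = b \<and> p = 3 * m + 1 \<and> q < m \<or>
     c = b \<and> 2 * m < p \<and> p \<le> 3 * m \<and> m \<le> q \<and> q \<le> 2 * m \<or>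
     c = Suc b \<and> 2 * m < p \<and> q < m"

definition adj :: "nat \<Rightarrow> nat \<Rightarrow> bool" where
  "adj u v \<longleftrightarrow> u \<noteq> v \<and>
     (u < apex \<and> v < apex \<and>
        (link (u div N) (u mod N) (v div N) (v mod N) \<or>
         link (v div N) (v mod N) (u div N) (u mod N)) \<or>
      u = apex \<and> 2 * m < v \<and> v < N \<or>
      v = apex \<and> 2 * m < u \<and> u < N)"

definition edges :: "nat set set" where
  "edges = {{u, v} | u v. adj u v}"

definition A :: "nat \<Rightarrow> nat set" where "A j = {v. v div N = j \<and> v mod N \<le> 2 * m}"
definition B :: "nat \<Rightarrow> nat set" where "B j = {v. v div N = j \<and> 2 * m < v mod N}"

lemma N_pos: "0 < N"
  by (simp add: N_def)

lemma mod_N_le: "v mod N \<le> 3 * m + 1"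
  using mod_less_divisor[OF N_pos, of v] by (simp add: N_def)

lemma less_apex_iff: "v < apex \<longleftrightarrow> v div N \<le> i"
  using div_less_iff_less_mult[OF N_pos, of v "Suc i"] by (simp add: apex_def less_Suc_eq_le)

lemma N_le_apex: "N \<le> apex"
  by (simp add: apex_def)

lemma card_vertices: "card vertices = Suc (Suc i * (3 * m + 2))"
  by (simp add: vertices_def apex_def N_def)

lemma adj_sym: "adj u v \<longleftrightarrow> adj v u"
  by (auto simp: adj_def)

lemma adj_apex_iff: "adj u apex \<longleftrightarrow> 2 * m < u \<and> u < N"
  using N_le_apex by (auto simp: adj_def)

lemma mem_edges: "{u, v} \<in> edges \<longleftrightarrow> adj u v"
  by (auto simp: edges_def doubleton_eq_iff adj_sym)

lemma simple_graph_vertices_edges: "simple_graph vertices edges"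
proof -
  have "u \<le> apex" if "adj u v" for u v
    using that N_le_apex by (auto simp: adj_def)
  then have "u \<in> vertices \<and> v \<in> vertices \<and> u \<noteq> v" if "adj u v" for u v
    using that adj_sym by (auto simp: vertices_def adj_def)
  then show ?thesis
    by (auto simp: simple_graph_def vertices_def edges_def)
qed

lemma edge_if_link:
  assumes "x \<noteq> y" "x div N \<le> i" "y div N \<le> i" "link (x div N) (x mod N) (y div N) (y mod N)"
  shows "{x, y} \<in> edges"
  using assms by (simp add: mem_edges adj_def less_apex_iff)

lemma clique_A: "j \<le> i \<Longrightarrow> x \<in> A j \<Longrightarrow> y \<in> A j \<Longrightarrow> x \<noteq> y \<Longrightarrow> {x, y} \<in> edges"
  by (rule edge_if_link) (auto simp: link_def A_def)

lemma clique_B: "j \<le> i \<Longrightarrow> x \<in> B j \<Longrightarrow> y \<in> B j \<Longrightarrow> x \<noteq> y \<Longrightarrow> {x, y} \<in> edges"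
  by (rule edge_if_link) (auto simp: link_def B_def)

lemma clique_apex_B0:
  assumes "x \<in> insert apex (B 0)" "y \<in> insert apex (B 0)" "x \<noteq> y"
  shows "{x, y} \<in> edges"
proof -
  have apex_adj: "adj v apex" if "v \<in> B 0" for v
    using that N_pos by (auto simp: B_def adj_apex_iff div_eq_0_iff)
  consider "x = apex" | "y = apex" | "x \<in> B 0" "y \<in> B 0" using assms by blast
  then show ?thesis
  proof cases
    case 1
    then show ?thesis using assms apex_adj adj_sym by (simp add: mem_edges)
  next
    case 2
    then show ?thesis using assms apex_adj by (simp add: mem_edges)
  qed (use assms clique_B in blast)
qed

(* Numbers of the smaller neighbours of vertex number q; those above q lie in the previous block. *)
definition lower_positions :: "nat \<Rightarrow> nat set" where
  "lower_positions q =
     (if q < m then {..<q} \<union> {2 * m<..3 * m + 1}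
      else if q \<le> 2 * m then {..<q}
      else if q \<le> 3 * m then {m..<q}
      else {..<m} \<union> {2 * m<..<3 * m + 1})"

lemma card_lower_positions: "card (lower_positions q) \<le> 2 * m"
proof -
  have "card ({..<q} \<union> {2 * m<..3 * m + 1}) \<le> q + (m + 1)"
    using card_Un_le[of "{..<q}" "{2 * m<..3 * m + 1}"] by simp
  moreover have "card ({..<m} \<union> {2 * m<..<3 * m + 1}) \<le> m + m"
    using card_Un_le[of "{..<m}" "{2 * m<..<3 * m + 1}"] by simp
  ultimately show ?thesis by (auto simp: lower_positions_def)
qed

lemma link_lower_positions:
  assumes "link b p c q \<or> link c q b p" and "b < c \<or> b = c \<and> p < q"
    and "p \<le> 3 * m + 1" and "q \<le> 3 * m + 1"
  shows "p \<in> lower_positions q \<and> b = (if p < q then c else c - 1)"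
  using assms unfolding link_def
  by (elim disjE conjE) (auto simp: lower_positions_def)

lemma div_mod_less_cases:
  assumes "u < v"
  shows "u div N < v div N \<or> u div N = v div N \<and> u mod N < v mod N"
proof -
  have "u div N \<le> v div N" using assms by (simp add: div_le_mono)
  moreover have "u mod N < v mod N" if "u div N = v div N"
  proof -
    have "u div N * N + u mod N < v div N * N + v mod N" using assms by simp
    then show ?thesis using that by (metis add_less_cancel_left)
  qed
  ultimately show ?thesis by linarith
qed

lemma smaller_neighbour_position:
  assumes "u < v" and "v < apex" and "adj u v"
  shows "u mod N \<in> lower_positions (v mod N) \<and>
    u div N = (if u mod N < v mod N then v div N else v div N - 1)"
proof -
  have "link (u div N) (u mod N) (v div N) (v mod N) \<or>
      link (v div N) (v mod N) (u div N) (u mod N)"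
    using assms by (auto simp: adj_def)
  then show ?thesis
    using link_lower_positions[OF _ div_mod_less_cases[OF assms(1)] mod_N_le mod_N_le] by blast
qed

lemma smaller_neighbour_eqI:
  assumes "u < v" "w < v" "v < apex" "adj u v" "adj w v" "u mod N = w mod N"
  shows "u = w"
proof -
  have "u div N = (if u mod N < v mod N then v div N else v div N - 1)"
    using smaller_neighbour_position[OF assms(1,3,4)] by blast
  moreover have "w div N = (if w mod N < v mod N then v div N else v div N - 1)"
    using smaller_neighbour_position[OF assms(2,3,5)] by blast
  ultimately have "u div N = w div N" using assms(6) by presburger
  then show ?thesis using assms(6) by (metis div_mult_mod_eq)
qed

lemma degenerate_vertices_edges: "degenerate (2 * m) vertices edges"
  unfolding vertices_def
proof (rule degenerate_atMost)
  fix v assume "v \<le> apex"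
  let ?L = "{u. u < v \<and> {u, v} \<in> edges}"
  show "card ?L \<le> 2 * m"
  proof (cases "v = apex")
    case True
    then have "?L \<subseteq> {2 * m<..<N}" by (auto simp: mem_edges adj_apex_iff)
    then have "card ?L \<le> card {2 * m<..<N}" by (intro card_mono) auto
    then show ?thesis using m_pos by (simp add: N_def)
  next
    case False
    with \<open>v \<le> apex\<close> have "v < apex" by simp
    have "inj_on (\<lambda>u. u mod N) ?L"
    proof (rule inj_onI)
      fix u w assume "u \<in> ?L" "w \<in> ?L" "u mod N = w mod N"
      then show "u = w"
        using smaller_neighbour_eqI[of u v w] \<open>v < apex\<close> by (simp add: mem_edges)
    qed
    moreover have "(\<lambda>u. u mod N) ` ?L \<subseteq> lower_positions (v mod N)"
    proof clarify
      fix u assume "u < v" "{u, v} \<in> edges"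
      then show "u mod N \<in> lower_positions (v mod N)"
        using smaller_neighbour_position[of u v] \<open>v < apex\<close> by (simp add: mem_edges)
    qed
    ultimately have "card ?L \<le> card (lower_positions (v mod N))"
      by (rule card_inj_on_le) (simp add: lower_positions_def)
    then show ?thesis using card_lower_positions le_trans by blast
  qed
qed

definition max_forest :: "nat set" where
  "max_forest = insert apex {v. v div N \<le> i \<and> v mod N \<in> {0, m, 3 * m + 1}}"

lemma card_blocks_positions:
  assumes "P \<subseteq> {..<N}"
  shows "card {v. v div N \<le> i \<and> v mod N \<in> P} = Suc i * card P"
proof -
  let ?V = "{v. v div N \<le> i \<and> v mod N \<in> P}"
  have "bij_betw (\<lambda>v. (v div N, v mod N)) ?V ({..i} \<times> P)"
  proof (rule bij_betw_byWitness[where f' = "\<lambda>(j, p). j * N + p"])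
    show "\<forall>v \<in> ?V. (\<lambda>(j, p). j * N + p) (v div N, v mod N) = v"
      by simp
    show "\<forall>jp \<in> {..i} \<times> P. (\<lambda>v. (v div N, v mod N)) ((\<lambda>(j, p). j * N + p) jp) = jp"
      using assms by auto
  qed (use assms in auto)
  then show ?thesis by (simp add: bij_betw_same_card card_cartesian_product)
qed

lemma card_max_forest: "card max_forest = 3 * i + 4"
proof -
  let ?F = "{v. v div N \<le> i \<and> v mod N \<in> {0, m, 3 * m + 1}}"
  have "{0, m, 3 * m + 1} \<subseteq> {..<N}" by (auto simp: N_def)
  then have "card ?F = Suc i * card {0, m, 3 * m + 1}" by (rule card_blocks_positions)
  then have "card ?F = 3 * Suc i" using m_pos by simp
  moreover have "?F \<subseteq> {..<apex}" by (auto simp: less_apex_iff)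
  moreover have "apex \<notin> ?F" using less_apex_iff by blast
  ultimately show ?thesis unfolding max_forest_def by (simp add: finite_subset)
qed

lemma max_forest_subset_vertices: "max_forest \<subseteq> vertices"
  by (auto simp: max_forest_def vertices_def less_apex_iff[symmetric])

lemma lower_positions_Int_forest_positions:
  "q \<in> {0, m, 3 * m + 1} \<Longrightarrow> p \<in> lower_positions q \<inter> {0, m, 3 * m + 1} \<Longrightarrow>
    p = (if q = 0 then 3 * m + 1 else 0)"
  using m_pos by (auto simp: lower_positions_def)

lemma no_cycle_max_forest: "\<not> has_cycle max_forest edges"
proof (rule no_cycle_if_unique_smaller_neighbour)
  fix v u w
  assume mem: "v \<in> max_forest" "u \<in> max_forest" "w \<in> max_forest"
    and less: "u < v" "w < v" and adjacent: "{u, v} \<in> edges" "{w, v} \<in> edges"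
  have "v \<le> apex" using mem(1) max_forest_subset_vertices by (auto simp: vertices_def)
  have "x \<noteq> apex" "x mod N \<in> {0, m, 3 * m + 1}" if "x \<in> max_forest" "x < v" for x
    using that \<open>v \<le> apex\<close> by (auto simp: max_forest_def)
  note pos = this
  show "u = w"
  proof (cases "v = apex")
    case True
    have "x = 3 * m + 1" if "x \<in> max_forest" "x < v" "{x, v} \<in> edges" for x
    proof -
      have "2 * m < x" "x < N" using that True by (auto simp: mem_edges adj_apex_iff)
      then show ?thesis using pos[OF that(1,2)] m_pos by auto
    qed
    then show ?thesis using mem less adjacent by metis
  next
    case False
    with \<open>v \<le> apex\<close> have "v < apex" by simp
    then have "v mod N \<in> {0, m, 3 * m + 1}" using mem(1) by (auto simp: max_forest_def)
    have "x mod N = (if v mod N = 0 then 3 * m + 1 else 0)"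
      if "x \<in> max_forest" "x < v" "{x, v} \<in> edges" for x
      using lower_positions_Int_forest_positions[OF \<open>v mod N \<in> _\<close>]
        smaller_neighbour_position[of x v] pos[OF that(1,2)] that \<open>v < apex\<close>
      by (simp add: mem_edges)
    then have "u mod N = w mod N" using mem less adjacent by presburger
    then show ?thesis
      using smaller_neighbour_eqI less \<open>v < apex\<close> adjacent by (simp add: mem_edges)
  qed
qed

definition prefix :: "nat \<Rightarrow> nat set" where
  "prefix j = insert apex {v. v div N \<le> j}"

lemma prefix_0: "prefix 0 = A 0 \<union> insert apex (B 0)"
  by (auto simp: prefix_def A_def B_def)

lemma prefix_Suc: "prefix (Suc j) = prefix j \<union> A (Suc j) \<union> B (Suc j)"
  by (auto simp: prefix_def A_def B_def)

lemma vertices_eq_prefix: "vertices = prefix i"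
  by (auto simp: prefix_def vertices_def less_apex_iff[symmetric])

lemma has_cycle_if_crowded_block:
  assumes "j < i" and v: "v \<in> S \<inter> B j"
    and p: "p \<in> S \<inter> A (Suc j)" "p' \<in> S \<inter> A (Suc j)" "p \<noteq> p'"
    and q: "q \<in> S \<inter> B (Suc j)" "q' \<in> S \<inter> B (Suc j)" "q \<noteq> q'"
  shows "has_cycle S edges"
proof -
  \<comment> \<open>If q or q' is the last vertex of B, every vertex of A sees q or q'; otherwise q and q'
    see the upper half of A, which forces p and p' into the lower half, where both see v.\<close>
  let ?c = "Suc j"
  have "?c \<le> i" using assms(1) by simp
  have AB_disjoint: "x \<noteq> y" if "x \<in> A ?c" "y \<in> B ?c" for x y
    using that by (auto simp: A_def B_def)
  have last_low: "{y, x} \<in> edges"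
    if "x \<in> A ?c" "x mod N < m" "y \<in> B ?c" "y mod N = 3 * m + 1" for x y
  proof (rule edge_if_link)
    show "link (y div N) (y mod N) (x div N) (x mod N)"
      using that by (simp add: A_def B_def link_def)
  qed (use that \<open>?c \<le> i\<close> AB_disjoint[of x y] in \<open>auto simp: A_def B_def\<close>)
  have nonlast_high: "{y, x} \<in> edges"
    if "x \<in> A ?c" "m \<le> x mod N" "y \<in> B ?c" "y mod N \<le> 3 * m" for x y
  proof (rule edge_if_link)
    show "link (y div N) (y mod N) (x div N) (x mod N)"
      using that by (simp add: A_def B_def link_def)
  qed (use that \<open>?c \<le> i\<close> AB_disjoint[of x y] in \<open>auto simp: A_def B_def\<close>)
  have prev_low: "{v, x} \<in> edges" if "x \<in> A ?c" "x mod N < m" for x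
  proof (rule edge_if_link)
    show "link (v div N) (v mod N) (x div N) (x mod N)"
      using that v by (simp add: A_def B_def link_def)
  qed (use that v \<open>?c \<le> i\<close> in \<open>auto simp: A_def B_def\<close>)
  have "{p, p'} \<in> edges" "{q, q'} \<in> edges"
    using p q clique_A[OF \<open>?c \<le> i\<close>] clique_B[OF \<open>?c \<le> i\<close>] by auto
  have "v \<noteq> p" "v \<noteq> p'" using v p by (auto simp: A_def B_def)
  have last: "has_cycle S edges"
    if "r \<in> S \<inter> B ?c" "r' \<in> S \<inter> B ?c" "r \<noteq> r'" "{r, r'} \<in> edges" "r mod N = 3 * m + 1"
    for r r'
  proof (rule has_cycle_two_linked_edges[of p p' r r'])
    have "r' mod N \<noteq> 3 * m + 1"
      using that div_mult_mod_eq[of r N] div_mult_mod_eq[of r' N] by (auto simp: B_def)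
    then have "r' mod N \<le> 3 * m" using mod_N_le[of r'] by simp
    then have "{x, r} \<in> edges \<or> {x, r'} \<in> edges" if "x \<in> A ?c" for x
      using that last_low[of x r] nonlast_high[of x r'] \<open>r \<in> _\<close> \<open>r' \<in> _\<close> \<open>r mod N = _\<close>
      by (cases "x mod N < m") (auto simp: insert_commute)
    then show "{p, r} \<in> edges \<or> {p, r'} \<in> edges" "{p', r} \<in> edges \<or> {p', r'} \<in> edges"
      using p by auto
    show "distinct [p, p', r, r']" using p that AB_disjoint by auto
  qed (use p that \<open>{p, p'} \<in> edges\<close> in auto)
  consider "q mod N = 3 * m + 1" | "q' mod N = 3 * m + 1"
    | "q mod N \<le> 3 * m" "q' mod N \<le> 3 * m"
    using mod_N_le[of q] mod_N_le[of q'] by linarith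
  then show ?thesis
  proof cases
    case 1
    then show ?thesis using last[of q q'] q \<open>{q, q'} \<in> edges\<close> by blast
  next
    case 2
    then show ?thesis using last[of q' q] q \<open>{q, q'} \<in> edges\<close> by (simp add: insert_commute)
  next
    case 3
    have high: "has_cycle S edges" if "x \<in> S \<inter> A ?c" "m \<le> x mod N" for x
    proof (rule has_cycle_triangle[of x q q'])
      show "{x, q} \<in> edges" "{q', x} \<in> edges"
        using that 3 q nonlast_high[of x q] nonlast_high[of x q'] by (auto simp: insert_commute)
      show "distinct [x, q, q']" using that q AB_disjoint by auto
    qed (use that q \<open>{q, q'} \<in> edges\<close> in auto)
    show ?thesis
    proof (cases "m \<le> p mod N \<or> m \<le> p' mod N")
      case True
      then show ?thesis using high p by blast
    next
      case False
      show ?thesis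
      proof (rule has_cycle_triangle[of v p p'])
        show "{v, p} \<in> edges" "{p', v} \<in> edges"
          using False p prev_low[of p] prev_low[of p'] by (auto simp: insert_commute)
      qed (use v p \<open>v \<noteq> p\<close> \<open>v \<noteq> p'\<close> \<open>{p, p'} \<in> edges\<close> in auto)
    qed
  qed
qed

lemma card_next_block_le_3:
  assumes "j < i" and "\<not> has_cycle S edges" and "S \<inter> B j \<noteq> {}"
  shows "card (S \<inter> A (Suc j)) + card (S \<inter> B (Suc j)) \<le> 3"
proof (rule ccontr)
  have "Suc j \<le> i" using assms(1) by simp
  have "card (S \<inter> A (Suc j)) \<le> 2" "card (S \<inter> B (Suc j)) \<le> 2"
    using card_clique_le_2_if_no_cycle[OF clique_A[OF \<open>Suc j \<le> i\<close>] assms(2)]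
      card_clique_le_2_if_no_cycle[OF clique_B[OF \<open>Suc j \<le> i\<close>] assms(2)] by auto
  moreover assume "\<not> card (S \<inter> A (Suc j)) + card (S \<inter> B (Suc j)) \<le> 3"
  ultimately have "2 \<le> card (S \<inter> A (Suc j))" "2 \<le> card (S \<inter> B (Suc j))" by linarith+
  then obtain p p' q q' where "p \<in> S \<inter> A (Suc j)" "p' \<in> S \<inter> A (Suc j)" "p \<noteq> p'"
    and "q \<in> S \<inter> B (Suc j)" "q' \<in> S \<inter> B (Suc j)" "q \<noteq> q'"
    by (metis card_ge_2_obtains)
  moreover obtain v where "v \<in> S \<inter> B j" using assms(3) by blast
  ultimately have "has_cycle S edges" using has_cycle_if_crowded_block assms(1) by blast
  with assms(2) show False by contradiction
qed

lemma card_forest_prefix: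
  assumes "\<not> has_cycle S edges" and "j \<le> i"
  shows "card (S \<inter> prefix j) \<le> 3 * j + 4 \<and>
    (S \<inter> B j = {} \<longrightarrow> card (S \<inter> prefix j) \<le> 3 * j + 3)"
  using assms(2)
proof (induction j)
  case 0
  have "card (S \<inter> prefix 0) \<le> card (S \<inter> A 0) + card (S \<inter> insert apex (B 0))"
    unfolding prefix_0 Int_Un_distrib by (rule card_Un_le)
  moreover have "card (S \<inter> A 0) \<le> 2"
    using card_clique_le_2_if_no_cycle[OF clique_A[OF le0] assms(1)] by blast
  moreover have "card (S \<inter> insert apex (B 0)) \<le> 2"
    using card_clique_le_2_if_no_cycle[OF clique_apex_B0 assms(1)] by blast
  moreover have "card (S \<inter> insert apex (B 0)) \<le> 1" if "S \<inter> B 0 = {}"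
  proof -
    have "S \<inter> insert apex (B 0) \<subseteq> {apex}" using that by blast
    then have "card (S \<inter> insert apex (B 0)) \<le> card {apex}" by (rule card_mono[rotated]) simp
    then show ?thesis by simp
  qed
  ultimately show ?case by auto
next
  case (Suc j)
  have "card (S \<inter> prefix (Suc j)) \<le>
      card (S \<inter> prefix j) + card (S \<inter> A (Suc j)) + card (S \<inter> B (Suc j))"
    unfolding prefix_Suc Int_Un_distrib by (meson add_right_mono card_Un_le order_trans)
  moreover have "card (S \<inter> A (Suc j)) \<le> 2" "card (S \<inter> B (Suc j)) \<le> 2"
    using card_clique_le_2_if_no_cycle[OF clique_A[OF Suc.prems] assms(1)]
      card_clique_le_2_if_no_cycle[OF clique_B[OF Suc.prems] assms(1)] by auto
  moreover have "card (S \<inter> A (Suc j)) + card (S \<inter> B (Suc j)) \<le> 3" if "S \<inter> B j \<noteq> {}"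
    using card_next_block_le_3 Suc.prems assms(1) that by simp
  moreover have "card (S \<inter> prefix j) \<le> 3 * j + 4"
    and "S \<inter> B j = {} \<Longrightarrow> card (S \<inter> prefix j) \<le> 3 * j + 3"
    using Suc by auto
  ultimately show ?case by (cases "S \<inter> B j = {}") auto
qed

lemma card_forest_le:
  assumes "S \<subseteq> vertices" and "\<not> has_cycle S edges"
  shows "card S \<le> 3 * i + 4"
  using card_forest_prefix[OF assms(2) order_refl] assms(1) vertices_eq_prefix
  by (simp add: Int_absorb2)

lemma fvs_number_vertices_edges: "fvs_number vertices edges = Suc i * (3 * m - 1)"
proof -
  have "fvs_number vertices edges = card vertices - card max_forest"
    using max_forest_subset_vertices no_cycle_max_forest card_forest_le
    by (intro fvs_number_eq_card_minus_max_forest) (auto simp: vertices_def card_max_forest)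
  also have "\<dots> = Suc i * (3 * m - 1)"
  proof -
    have "3 * m + 2 = (3 * m - 1) + 3" using m_pos by simp
    then have "Suc i * (3 * m + 2) = Suc i * (3 * m - 1) + 3 * Suc i"
      by (metis distrib_left mult.commute)
    then show ?thesis by (simp add: card_vertices card_max_forest)
  qed
  finally show ?thesis .
qed

end

theorem mainTheorem1:
  fixes k :: nat
  assumes "even k" and "k \<ge> 2"
  shows "\<exists>(V :: nat \<Rightarrow> nat set) (E :: nat \<Rightarrow> nat set set). \<forall>i::nat.
           simple_graph (V i) (E i) \<and> degenerate k (V i) (E i) \<and>
           n_vertices (V i) (E i) = (3 * k + 6) div 2 + i * ((3 * k + 4) div 2) \<and>
           fvs_number (V i) (E i) = (3 * k - 2) div 2 + i * ((3 * k - 2) div 2)"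
proof -
  obtain m where k: "k = 2 * m" using assms(1) by (auto elim: evenE)
  then have graph: "chain_graph m" using assms(2) by unfold_locales simp
  have "(3 * k + 6) div 2 = Suc (3 * m + 2)" "(3 * k + 4) div 2 = 3 * m + 2"
    "(3 * k - 2) div 2 = 3 * m - 1" using k by presburger+
  then show ?thesis
    using chain_graph.simple_graph_vertices_edges[OF graph]
      chain_graph.degenerate_vertices_edges[OF graph]
      chain_graph.card_vertices[OF graph] chain_graph.fvs_number_vertices_edges[OF graph]
    by (intro exI[of _ "chain_graph.vertices m"] exI[of _ "chain_graph.edges m"])
      (simp add: k n_vertices_def)
qed

end
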